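(* Let $n,m,k\in\mathbb{N}_0$ with $n,k>0$ and $n>k\ge m$, and let $r,s,p\in\mathbb{R}$ with $r>s$ and $r>p$. Then \[ \int_0^\infty \frac{x^n\,e^{(mr+(k-m)s+p)x}}{(e^{rx}-e^{sx})^{k+1}}\,dx =\frac{1}{(r-s)^{n+1}}\,\frac{n!}{k!}\sum_{i=0}^{k}\sum_{j=0}^{k-i}(-1)^{k+i}\binom{i+j}{j}S_k^{(i+j)}\left(k-m+\frac{s-p}{r-s}\right)^{j}\zeta\!\left(n+1-i,\frac{r-p}{r-s}\right), \] and this quantity also equals \[ \frac{n!}{(r-s)^{n+1}}\sum_{i=0}^{k} q_{k+1,i}\!\left(k-m+\frac{r-p}{r-s}\right)\zeta\!\left(n+1-i,\frac{r-p}{r-s}\right). \]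
   Context: $S_k^{(l)}$ denotes the (signed) Stirling numbers of the first kind, defined by $x(x-1)\cdots(x-k+1)=\sum_{l=0}^{k}S_k^{(l)}x^l$ (so e.g. $S_2^{(1)}=-1$). $\zeta(s,a)=\sum_{l=0}^\infty (l+a)^{-s}$ is the Hurwitz zeta function. For $N\in\mathbb{N}$, $0\le j\le N-1$ and $a\in\mathbb{R}$, the coefficients are \[ q_{N,j}(a)=\frac{1}{(N-1)!}\sum_{l=j}^{N-1}(-1)^{N+l-1}\binom{l}{j}S_{N-1}^{(l)}(1-a)^{l-j}. \] *)

theory Defs
  imports "HOL-Analysis.Analysis" "HOL-Computational_Algebra.Polynomial"
begin

definition stirling1_signed :: "nat \<Rightarrow> nat \<Rightarrow> int" where
  "stirling1_signed k l = coeff (\<Prod>i<k. [:- of_nat i, 1:]) l"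

definition hurwitz_zeta_real :: "real \<Rightarrow> real \<Rightarrow> real" where
  "hurwitz_zeta_real s a = (\<Sum>l. (real l + a) powr (- s))"

definition q_coeff :: "nat \<Rightarrow> nat \<Rightarrow> real \<Rightarrow> real" where
  "q_coeff N j a = (1 / fact (N - 1)) *
     (\<Sum>l = j..N - 1. (-1) ^ (N + l - 1) * real (l choose j)
        * of_int (stirling1_signed (N - 1) l) * (1 - a) ^ (l - j))"

end

theory Submission
  imports Defs
begin

text \<open>With \<open>d = r - s\<close>, \<open>a = (r - p)/(r - s)\<close> and \<open>c = k - m + a\<close>, the integrand is
  \<open>x^n e^{-cdx} (1 - e^{-dx})^{-(k+1)}\<close>. Expanding the last factor as a negative binomial
  series and integrating termwise (a Gamma integral, justified by monotone convergence) gives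
  \<open>n!/d^{n+1} \<Sum>\<^sub>l C(l+k,k)/(l+c)^{n+1}\<close>. Now \<open>k! C(l+k,k)\<close> is the rising product
  \<open>(l+1)\<cdots>(l+k)\<close>, a polynomial of degree \<open>k\<close> in \<open>l + c\<close> whose coefficients are Stirling
  numbers; as a polynomial in \<open>j + a\<close> it vanishes at \<open>j = 0, \<dots>, k-m-1\<close>, so the sum over \<open>l\<close>
  extends to the full Hurwitz zeta series in \<open>j = l + k - m\<close>.\<close>

lemma stirling1_signed_eq_0:
  assumes "l > k"
  shows "stirling1_signed k l = 0"
proof -
  have "degree (\<Prod>i<k. [:- of_nat i, 1:] :: int poly) \<le> (\<Sum>i<k. degree ([:- of_nat i, 1:] :: int poly))"
    by (rule order_trans[OF degree_prod_sum_le]) (auto simp: o_def)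
  also have "\<dots> = k" by simp
  finally show ?thesis using assms unfolding stirling1_signed_def by (intro coeff_eq_0) simp
qed

lemma prod_falling_eq_stirling1_sum:
  "(\<Prod>i<k. (y::real) - of_nat i) = (\<Sum>l\<le>k. of_int (stirling1_signed k l) * y ^ l)"
proof (induction k)
  case 0
  then show ?case by (simp add: stirling1_signed_def)
next
  case (Suc k)
  have P: "(\<Prod>i<Suc k. [:- of_nat i, 1:] :: int poly)
      = smult (- of_nat k) (\<Prod>i<k. [:- of_nat i, 1:]) + pCons 0 (\<Prod>i<k. [:- of_nat i, 1:])"
    by (simp add: mult_pCons_right)
  have rec: "stirling1_signed (Suc k) l
      = - of_nat k * stirling1_signed k l + (case l of 0 \<Rightarrow> 0 | Suc l' \<Rightarrow> stirling1_signed k l')" for l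
    unfolding stirling1_signed_def P by (cases l) auto
  have "(\<Sum>l\<le>Suc k. of_int (stirling1_signed (Suc k) l) * y ^ l)
      = - of_nat k * (\<Sum>l\<le>Suc k. of_int (stirling1_signed k l) * y ^ l)
        + (\<Sum>l\<le>Suc k. of_int (case l of 0 \<Rightarrow> 0 | Suc l' \<Rightarrow> stirling1_signed k l') * y ^ l)"
    by (simp only: sum_distrib_left sum.distrib[symmetric])
      (intro sum.cong refl, simp add: rec algebra_simps)
  also have "(\<Sum>l\<le>Suc k. of_int (stirling1_signed k l) * y ^ l)
      = (\<Sum>l\<le>k. of_int (stirling1_signed k l) * y ^ l)"
    by (simp add: stirling1_signed_eq_0)
  also have "(\<Sum>l\<le>Suc k. of_int (case l of 0 \<Rightarrow> 0 | Suc l' \<Rightarrow> stirling1_signed k l') * y ^ l)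
      = y * (\<Sum>l\<le>k. of_int (stirling1_signed k l) * y ^ l)"
    by (subst sum.atMost_Suc_shift) (simp add: sum_distrib_left algebra_simps)
  finally show ?case using Suc.IH by (simp add: algebra_simps)
qed

lemma sum_atMost_triangle_swap:
  fixes F :: "nat \<Rightarrow> nat \<Rightarrow> 'a::comm_monoid_add"
  shows "(\<Sum>l\<le>k. \<Sum>i\<le>l. F l i) = (\<Sum>i\<le>k. \<Sum>l=i..k. F l i)"
proof (induction k)
  case 0
  then show ?case by simp
next
  case (Suc k)
  have "(\<Sum>i\<le>Suc k. \<Sum>l=i..Suc k. F l i) = (\<Sum>i\<le>k. \<Sum>l=i..Suc k. F l i) + F (Suc k) (Suc k)"
    by simp
  also have "(\<Sum>i\<le>k. \<Sum>l=i..Suc k. F l i) = (\<Sum>i\<le>k. (\<Sum>l=i..k. F l i) + F (Suc k) i)"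
    by (intro sum.cong refl) (simp add: atLeastAtMostSuc_conv add.commute)
  finally show ?case using Suc.IH by (simp add: sum.distrib add_ac)
qed

text \<open>The coefficient of \<open>t^i\<close> in \<open>(t - b)(t - b + 1)\<cdots>(t - b + k - 1)\<close>.\<close>
definition shifted_rising_coeff :: "nat \<Rightarrow> real \<Rightarrow> nat \<Rightarrow> real" where
  "shifted_rising_coeff k b i =
     (\<Sum>l=i..k. (-1) ^ (k + i) * real (l choose i) * of_int (stirling1_signed k l) * b ^ (l - i))"

lemma prod_shifted_rising_eq_sum:
  "(\<Prod>j<k. t - b + real j) = (\<Sum>i\<le>k. shifted_rising_coeff k b i * t ^ i)"
proof -
  have "(\<Prod>j<k. t - b + real j) = (\<Prod>j<k. (-1) * ((b - t) - real j))"
    by (intro prod.cong refl) simp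
  also have "\<dots> = (-1) ^ k * (\<Prod>j<k. (b - t) - real j)"
    unfolding prod.distrib by simp
  also have "\<dots> = (-1) ^ k * (\<Sum>l\<le>k. of_int (stirling1_signed k l) * (b - t) ^ l)"
    by (simp add: prod_falling_eq_stirling1_sum)
  also have "\<dots> = (\<Sum>l\<le>k. \<Sum>i\<le>l. (-1) ^ (k + i) * real (l choose i)
                    * of_int (stirling1_signed k l) * b ^ (l - i) * t ^ i)"
  proof -
    have "(b - t) ^ l = (\<Sum>i\<le>l. real (l choose i) * (-t) ^ i * b ^ (l - i))" for l
      using binomial_ring[of "-t" b l] by simp
    then show ?thesis
      by (simp add: sum_distrib_left power_add power_minus[of t] algebra_simps)
  qed
  also have "\<dots> = (\<Sum>i\<le>k. shifted_rising_coeff k b i * t ^ i)"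
    by (simp add: sum_atMost_triangle_swap shifted_rising_coeff_def sum_distrib_right)
  finally show ?thesis .
qed

lemma q_coeff_Suc_eq_shifted_rising_coeff:
  assumes "i \<le> k"
  shows "q_coeff (Suc k) i c = shifted_rising_coeff k (c - 1) i / fact k"
proof -
  have term_eq: "(-1) ^ (k + l) * real (l choose i) * of_int (stirling1_signed k l) * (1 - c) ^ (l - i)
      = (-1) ^ (k + i) * real (l choose i) * of_int (stirling1_signed k l) * (c - 1) ^ (l - i)"
    if "i \<le> l" for l
  proof -
    have "k + l + (l - i) = (k + i) + 2 * (l - i)"
      using that by simp
    then have sign: "(-1::real) ^ (k + l) * (-1) ^ (l - i) = (-1) ^ (k + i)"
      by (simp only: power_add[symmetric]) (simp add: power_add power_mult)
    have "(1 - c) ^ (l - i) = (-1) ^ (l - i) * (c - 1) ^ (l - i)"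
      by (simp flip: power_mult_distrib)
    then have "(-1) ^ (k + l) * real (l choose i) * of_int (stirling1_signed k l) * (1 - c) ^ (l - i)
        = ((-1) ^ (k + l) * (-1) ^ (l - i)) * (real (l choose i) * of_int (stirling1_signed k l) * (c - 1) ^ (l - i))"
      by (simp only: mult_ac)
    then show ?thesis
      unfolding sign by (simp only: mult_ac)
  qed
  have "q_coeff (Suc k) i c = 1 / fact k * (\<Sum>l=i..k. (-1) ^ (k + l) * real (l choose i)
          * of_int (stirling1_signed k l) * (1 - c) ^ (l - i))"
    unfolding q_coeff_def by simp
  also have "\<dots> = shifted_rising_coeff k (c - 1) i / fact k"
    unfolding shifted_rising_coeff_def by (simp only: times_divide_eq_left mult_1_left)
      (intro arg_cong[where f = "\<lambda>x. x / fact k"] sum.cong refl term_eq, simp)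
  finally show ?thesis .
qed

lemma shifted_rising_coeff_reindex:
  assumes "i \<le> k"
  shows "shifted_rising_coeff k b i =
    (\<Sum>j=0..k-i. (-1) ^ (k + i) * real ((i + j) choose j) * of_int (stirling1_signed k (i + j)) * b ^ j)"
proof -
  have "shifted_rising_coeff k b i = (\<Sum>l=0+i..(k-i)+i. (-1) ^ (k + i) * real (l choose i)
          * of_int (stirling1_signed k l) * b ^ (l - i))"
    using assms by (simp add: shifted_rising_coeff_def)
  also have "\<dots> = (\<Sum>j=0..k-i. (-1) ^ (k + i) * real ((j + i) choose i)
          * of_int (stirling1_signed k (j + i)) * b ^ (j + i - i))"
    by (rule sum.shift_bounds_cl_nat_ivl)
  also have "\<dots> = (\<Sum>j=0..k-i. (-1) ^ (k + i) * real ((i + j) choose j)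
          * of_int (stirling1_signed k (i + j)) * b ^ j)"
    by (intro sum.cong refl) (simp add: binomial_symmetric[of i "j + i" for j] add.commute)
  finally show ?thesis .
qed

lemma sum_shifted_rising_coeff_eq_stirling1_double_sum:
  "(\<Sum>i\<le>k. shifted_rising_coeff k b i * z i) =
    (\<Sum>i = 0..k. \<Sum>j = 0..k - i. (-1) ^ (k + i) * real ((i + j) choose j)
       * of_int (stirling1_signed k (i + j)) * b ^ j * z i)"
  unfolding atLeast0AtMost[of k]
  by (intro sum.cong refl) (simp add: shifted_rising_coeff_reindex sum_distrib_right)

lemma sum_shifted_rising_coeff_div_fact_eq_q_coeff_sum:
  "(\<Sum>i\<le>k. shifted_rising_coeff k (c - 1) i * z i) / fact k = (\<Sum>i = 0..k. q_coeff (k + 1) i c * z i)"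
  unfolding atLeast0AtMost sum_divide_distrib
  by (intro sum.cong refl) (simp add: q_coeff_Suc_eq_shifted_rising_coeff)

lemma hurwitz_zeta_real_sums:
  assumes "a > 0" "q \<ge> 2"
  shows "(\<lambda>j. 1 / (real j + a) ^ q) sums hurwitz_zeta_real (real q) a"
proof -
  have powr_eq: "(real j + a) powr (- real q) = 1 / (real j + a) ^ q" for j
    using assms by (simp add: powr_minus powr_realpow divide_inverse)
  have "summable (\<lambda>j. 1 / (real j + a) ^ q)"
  proof (rule summable_comparison_test'[where N = 1])
    show "summable (\<lambda>j. inverse (real j ^ q))"
      by (rule inverse_power_summable) (use assms in auto)
    fix j :: nat
    assume "j \<ge> 1"
    moreover have "real j ^ q \<le> (real j + a) ^ q"
      by (rule power_mono) (use assms in auto)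
    ultimately show "norm (1 / (real j + a) ^ q) \<le> inverse (real j ^ q)"
      using assms by (simp add: divide_inverse le_imp_inverse_le)
  qed
  then show ?thesis
    unfolding hurwitz_zeta_real_def powr_eq by (simp add: summable_sums)
qed

lemma prod_rising_eq_fact_mult_choose:
  "(\<Prod>t<k. real l + 1 + real t) = fact k * real ((l + k) choose k)"
proof (induction k)
  case 0
  then show ?case by simp
next
  case (Suc k)
  have "real (Suc (l + k)) * real ((l + k) choose k) = real (Suc (l + k) choose Suc k) * real (Suc k)"
    by (metis of_nat_mult Suc_times_binomial_eq)
  then show ?case using Suc.IH by (simp add: algebra_simps)
qed

lemma shifted_rising_coeff_sum_div_power:
  assumes "x \<noteq> 0" "k \<le> N"
  shows "(\<Sum>i\<le>k. shifted_rising_coeff k b i * (1 / x ^ (N - i))) = (\<Prod>j<k. x - b + real j) / x ^ N"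
proof -
  have "(\<Sum>i\<le>k. shifted_rising_coeff k b i * (1 / x ^ (N - i)))
      = (\<Sum>i\<le>k. shifted_rising_coeff k b i * x ^ i / x ^ N)"
    using assms by (intro sum.cong refl) (simp add: power_diff)
  then show ?thesis
    by (simp add: prod_shifted_rising_eq_sum sum_divide_distrib)
qed

text \<open>For \<open>j < K\<close> the rising product in \<open>h j\<close> contains the factor
  \<open>j + a - b + (K - j - 1) = 0\<close>, so the first \<open>K\<close> terms of the zeta combination vanish.\<close>
lemma choose_div_power_sums_hurwitz_zeta:
  fixes a :: real and K k n :: nat
  assumes "a > 0" "K \<le> k" "k < n"
  shows "(\<lambda>l. real ((l + k) choose k) / (real l + real K + a) ^ (n + 1)) sums
     ((\<Sum>i\<le>k. shifted_rising_coeff k (real K + a - 1) i * hurwitz_zeta_real (real (n + 1 - i)) a)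
       / fact k)"
proof -
  define b where "b = real K + a - 1"
  define h where "h j = (\<Sum>i\<le>k. shifted_rising_coeff k b i * (1 / (real j + a) ^ (n + 1 - i)))" for j
  have h_sums: "h sums (\<Sum>i\<le>k. shifted_rising_coeff k b i * hurwitz_zeta_real (real (n + 1 - i)) a)"
    unfolding h_def by (intro sums_sum sums_mult hurwitz_zeta_real_sums) (use assms in auto)
  have h_eq: "h j = (\<Prod>t<k. real j + a - b + real t) / (real j + a) ^ (n + 1)" for j
    unfolding h_def using assms by (intro shifted_rising_coeff_sum_div_power) auto
  have "h j = 0" if "j < K" for j
  proof -
    have "real j + a - b + real (K - j - 1) = 0"
      using that by (simp add: of_nat_diff b_def)
    moreover have "K - j - 1 < k"
      using that assms by simp
    ultimately show ?thesis
      unfolding h_eq by (subst prod_zero) auto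
  qed
  then have "(\<lambda>l. h (l + K)) sums (\<Sum>i\<le>k. shifted_rising_coeff k b i * hurwitz_zeta_real (real (n + 1 - i)) a)"
    using sums_split_initial_segment[OF h_sums, of K] by simp
  moreover have "h (l + K) = fact k * (real ((l + k) choose k) / (real l + real K + a) ^ (n + 1))" for l
  proof -
    have "(\<Prod>t<k. real (l + K) + a - b + real t) = (\<Prod>t<k. real l + 1 + real t)"
      by (intro prod.cong refl) (simp add: b_def)
    then show ?thesis
      unfolding h_eq prod_rising_eq_fact_mult_choose by (simp add: add_ac)
  qed
  ultimately show ?thesis
    using sums_divide[of _ _ "fact k"] by (force simp: b_def)
qed

lemma has_integral_power_div_exp:
  "((\<lambda>t::real. t ^ n / exp t) has_integral fact n) {0<..}"
proof -
  have "((\<lambda>t. t powr (real (Suc n) - 1) / exp t) has_integral Gamma (real (Suc n))) {0..}"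
    by (rule Gamma_integral_real) simp
  then have "((\<lambda>t. if t \<in> {0<..} then t powr (real (Suc n) - 1) / exp t else 0)
           has_integral Gamma (real (Suc n))) {0..}"
    by (rule has_integral_spike [of "{0}", rotated 2]) auto
  then have "((\<lambda>t. t powr (real (Suc n) - 1) / exp t) has_integral Gamma (real (Suc n))) {0<..}"
    by (subst (asm) has_integral_restrict) auto
  moreover have "Gamma (real (Suc n)) = fact n"
    using Gamma_fact[of n] by (simp add: add.commute)
  ultimately have "((\<lambda>t. t powr (real (Suc n) - 1) / exp t) has_integral fact n) {0<..}"
    by simp
  then show ?thesis
    by (elim has_integral_eq[rotated]) (simp add: powr_realpow)
qed

lemma has_integral_power_mult_exp_neg:
  fixes b :: real
  assumes "b > 0"
  shows "((\<lambda>x. x ^ n * exp (- (b * x))) has_integral fact n / b ^ (n + 1)) {0<..}"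
proof -
  have img: "(\<lambda>x. b * x) ` {0<..} = ({0<..} :: real set)"
  proof (auto simp: assms)
    fix x :: real
    assume "x > 0"
    then show "x \<in> (\<lambda>x. b * x) ` {0<..}"
      using assms by (intro image_eqI[of _ _ "x / b"]) auto
  qed
  have der: "((\<lambda>x. b * x) has_field_derivative b) (at x within {0<..})" for x
    by (auto intro!: derivative_eq_intros)
  have inj: "inj_on (\<lambda>x. b * x) ({0<..} :: real set)"
    using assms by (auto simp: inj_on_def)
  have "(\<lambda>t::real. t ^ n / exp t) absolutely_integrable_on {0<..}"
    using has_integral_power_div_exp
    by (intro nonnegative_absolutely_integrable_1) (auto simp: has_integral_integrable)
  then have "(\<lambda>x. \<bar>b\<bar> * ((b * x) ^ n / exp (b * x))) absolutely_integrable_on {0<..} \<and>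
        integral {0<..} (\<lambda>x. \<bar>b\<bar> * ((b * x) ^ n / exp (b * x))) = fact n"
    using has_absolute_integral_change_of_variables_1'[OF _ der inj, of "\<lambda>t. t ^ n / exp t" "fact n"]
      has_integral_power_div_exp by (simp add: img integral_unique)
  then have "((\<lambda>x. \<bar>b\<bar> * ((b * x) ^ n / exp (b * x))) has_integral fact n) {0<..}"
    using absolutely_integrable_on_def has_integral_integral by metis
  from has_integral_mult_left[OF this, of "1 / b ^ (n + 1)"] show ?thesis
    unfolding times_divide_eq_right mult_1_right
    by (elim has_integral_eq[rotated]) (use assms in \<open>simp add: power_mult_distrib exp_minus field_simps\<close>)
qed

lemma negative_binomial_sums:
  fixes y :: real
  assumes "0 \<le> y" "y < 1"
  shows "(\<lambda>l. real ((l + k) choose k) * y ^ l) sums (1 / (1 - y) ^ (k + 1))"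
proof -
  have "(\<lambda>l. ((- real (Suc k)) gchoose l) * (-y) ^ l) sums (1 + -y) powr (- real (Suc k))"
    by (rule gen_binomial_real) (use assms in auto)
  moreover have "((- real (Suc k)) gchoose l) * (-y) ^ l = real ((l + k) choose k) * y ^ l" for l
  proof -
    have "(- real (Suc k)) gchoose l = (-1) ^ l * (real (l + k) gchoose l)"
      by (subst gbinomial_minus) (simp add: algebra_simps)
    also have "real (l + k) gchoose l = real ((l + k) choose l)"
      by (simp add: binomial_gbinomial)
    also have "(l + k) choose l = (l + k) choose k"
      by (subst binomial_symmetric) auto
    finally have coeff: "(- real (Suc k)) gchoose l = (-1) ^ l * real ((l + k) choose k)" .
    have "(-1::real) ^ l * (-1) ^ l = 1"
      by (simp flip: power_mult_distrib)
    moreover have "((- real (Suc k)) gchoose l) * (-y) ^ l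
        = ((-1) ^ l * (-1) ^ l) * (real ((l + k) choose k) * y ^ l)"
      unfolding coeff power_minus[of y] by (simp only: mult_ac)
    ultimately show ?thesis by simp
  qed
  moreover have "(1 + -y) powr (- real (Suc k)) = 1 / (1 - y) ^ (k + 1)"
  proof -
    have "(1 + -y) powr (- real (Suc k)) = inverse ((1 - y) powr real (Suc k))"
      using powr_minus[of "1 - y" "real (Suc k)"] by simp
    also have "(1 - y) powr real (Suc k) = (1 - y) ^ Suc k"
      by (rule powr_realpow) (use assms in simp)
    finally show ?thesis by (simp add: divide_inverse)
  qed
  ultimately show ?thesis by simp
qed

lemma sums_power_exp_div_one_minus_exp_power:
  fixes c d x :: real
  assumes "d * x > 0"
  shows "(\<lambda>l. real ((l + k) choose k) * (x ^ n * exp (- ((real l + c) * d * x)))) sums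
     (x ^ n * exp (- (c * d * x)) / (1 - exp (- (d * x))) ^ (k + 1))"
proof -
  define y where "y = exp (- (d * x))"
  have "0 \<le> y" "y < 1"
    using assms by (simp_all add: y_def)
  from sums_mult[OF negative_binomial_sums[OF this], of "x ^ n * exp (- (c * d * x))"]
  have "(\<lambda>l. x ^ n * exp (- (c * d * x)) * (real ((l + k) choose k) * y ^ l)) sums
      (x ^ n * exp (- (c * d * x)) / (1 - y) ^ (k + 1))"
    by simp
  moreover have "exp (- ((real l + c) * d * x)) = exp (- (c * d * x)) * y ^ l" for l
    unfolding y_def by (simp flip: exp_of_nat_mult exp_add add: algebra_simps)
  ultimately show ?thesis
    by (simp add: y_def mult_ac)
qed

lemma has_integral_power_exp_div_one_minus_exp_power:
  fixes c d :: real
  assumes "c > 0" "d > 0"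
    and sums_Z: "(\<lambda>l. real ((l + k) choose k) / (real l + c) ^ (n + 1)) sums Z"
  shows "((\<lambda>x. x ^ n * exp (- (c * d * x)) / (1 - exp (- (d * x))) ^ (k + 1))
           has_integral fact n / d ^ (n + 1) * Z) {0<..}"
proof -
  define f where "f x = x ^ n * exp (- (c * d * x)) / (1 - exp (- (d * x))) ^ (k + 1)" for x :: real
  define u where "u l x = real ((l + k) choose k) * (x ^ n * exp (- ((real l + c) * d * x)))" for l x
  define g where "g N x = (\<Sum>l<N. u l x)" for N x
  have u_integral: "(u l has_integral real ((l + k) choose k) * (fact n / ((real l + c) * d) ^ (n + 1))) {0<..}" for l
    unfolding u_def using assms has_integral_power_mult_exp_neg[of "(real l + c) * d" n]
    by (intro has_integral_mult_right) (simp add: mult.assoc)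
  have g_integral: "integral {0<..} (g N) =
      (\<Sum>l<N. real ((l + k) choose k) * (fact n / ((real l + c) * d) ^ (n + 1)))" for N
    unfolding g_def by (intro integral_unique has_integral_sum u_integral) simp
  have "(\<lambda>l. fact n / d ^ (n + 1) * (real ((l + k) choose k) / (real l + c) ^ (n + 1))) sums
      (fact n / d ^ (n + 1) * Z)"
    by (rule sums_mult[OF sums_Z])
  then have g_limit: "(\<lambda>N. integral {0<..} (g N)) \<longlonglongrightarrow> fact n / d ^ (n + 1) * Z"
    unfolding g_integral sums_def by (simp add: power_mult_distrib mult_ac)
  have "f integrable_on {0<..} \<and> (\<lambda>N. integral {0<..} (g N)) \<longlonglongrightarrow> integral {0<..} f"
  proof (rule monotone_convergence_increasing)
    show "g N integrable_on {0<..}" for N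
      unfolding g_def using u_integral by (intro integrable_sum) blast+
    show "g N x \<le> g (Suc N) x" if "x \<in> {0<..}" for N x
      using that unfolding g_def u_def by simp
    show "(\<lambda>N. g N x) \<longlonglongrightarrow> f x" if "x \<in> {0<..}" for x
      using sums_power_exp_div_one_minus_exp_power[of d x k n c] that assms
      unfolding g_def u_def f_def sums_def by simp
    show "bounded (range (\<lambda>N. integral {0<..} (g N)))"
      by (rule convergent_imp_bounded[OF g_limit])
  qed
  with g_limit have "(f has_integral fact n / d ^ (n + 1) * Z) {0<..}"
    using LIMSEQ_unique has_integral_integral by metis
  then show ?thesis
    unfolding f_def .
qed

lemma exp_div_exp_diff_power_eq:
  fixes e r s x :: real
  shows "exp (e * x) / (exp (r * x) - exp (s * x)) ^ (k + 1)
    = exp (- (((real k + 1) * r - e) * x)) / (1 - exp (- ((r - s) * x))) ^ (k + 1)"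
proof -
  have "exp (e * x) = exp (- (((real k + 1) * r - e) * x)) * exp (r * x) ^ (k + 1)"
    by (simp add: algebra_simps flip: exp_add exp_of_nat_mult)
  moreover have "exp (r * x) - exp (s * x) = exp (r * x) * (1 - exp (- ((r - s) * x)))"
    by (simp add: algebra_simps flip: exp_add)
  ultimately show ?thesis
    by (simp add: power_mult_distrib)
qed

lemma has_integral_power_exp_div_exp_diff_power:
  fixes e r s :: real
  assumes "s < r" "e < (real k + 1) * r"
    and "(\<lambda>l. real ((l + k) choose k) / (real l + ((real k + 1) * r - e) / (r - s)) ^ (n + 1)) sums Z"
  shows "((\<lambda>x. x ^ n * exp (e * x) / (exp (r * x) - exp (s * x)) ^ (k + 1))
           has_integral fact n / (r - s) ^ (n + 1) * Z) {0<..}"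
proof -
  define c where "c = ((real k + 1) * r - e) / (r - s)"
  have "c > 0"
    using assms by (simp add: c_def)
  have "c * (r - s) = (real k + 1) * r - e"
    using assms by (simp add: c_def)
  then have "(\<lambda>x. x ^ n * exp (e * x) / (exp (r * x) - exp (s * x)) ^ (k + 1))
      = (\<lambda>x. x ^ n * exp (- (c * (r - s) * x)) / (1 - exp (- ((r - s) * x))) ^ (k + 1))"
    unfolding times_divide_eq_right[symmetric] exp_div_exp_diff_power_eq by simp
  then show ?thesis
    using has_integral_power_exp_div_one_minus_exp_power[OF \<open>c > 0\<close> _ assms(3)[folded c_def]] assms
    by simp
qed

theorem mainTheorem1:
  fixes n m k :: nat and r s p :: real
  assumes "n > 0" "k > 0" "n > k" "k \<ge> m" "r > s" "r > p"
  defines "I \<equiv> integral {0<..} (\<lambda>x::real. x ^ n * exp ((real m * r + (real k - real m) * s + p) * x)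
                   / (exp (r * x) - exp (s * x)) ^ (k + 1))"
  shows "((\<lambda>x::real. x ^ n * exp ((real m * r + (real k - real m) * s + p) * x)
                   / (exp (r * x) - exp (s * x)) ^ (k + 1)) integrable_on {0<..})
    \<and> I = 1 / (r - s) ^ (n + 1) * (fact n / fact k) *
          (\<Sum>i = 0..k. \<Sum>j = 0..k - i. (-1) ^ (k + i) * real ((i + j) choose j)
             * of_int (stirling1_signed k (i + j))
             * (real k - real m + (s - p) / (r - s)) ^ j
             * hurwitz_zeta_real (real (n + 1 - i)) ((r - p) / (r - s)))
    \<and> I = fact n / (r - s) ^ (n + 1) *
          (\<Sum>i = 0..k. q_coeff (k + 1) i (real k - real m + (r - p) / (r - s))
             * hurwitz_zeta_real (real (n + 1 - i)) ((r - p) / (r - s)))"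
proof -
  define a where "a = (r - p) / (r - s)"
  define c where "c = real k - real m + a"
  define S where "S = (\<Sum>i\<le>k. shifted_rising_coeff k (c - 1) i * hurwitz_zeta_real (real (n + 1 - i)) a)"
  have "a > 0"
    using assms by (simp add: a_def)
  have ratio: "((real k + 1) * r - (real m * r + (real k - real m) * s + p)) / (r - s) = real (k - m) + a"
    using assms by (simp add: a_def of_nat_diff field_simps)
  then have "(\<lambda>l. real ((l + k) choose k) / (real l + ((real k + 1) * r
      - (real m * r + (real k - real m) * s + p)) / (r - s)) ^ (n + 1)) sums (S / fact k)"
    using choose_div_power_sums_hurwitz_zeta[of a "k - m" k n] \<open>a > 0\<close> assms
    unfolding S_def c_def by (simp add: add.assoc)
  moreover have "real m * r + (real k - real m) * s + p < (real k + 1) * r"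
  proof -
    have "0 < ((real k + 1) * r - (real m * r + (real k - real m) * s + p)) / (r - s)"
      unfolding ratio using \<open>a > 0\<close> by simp
    then show ?thesis
      using assms by (simp add: zero_less_divide_iff)
  qed
  ultimately have integral: "((\<lambda>x::real. x ^ n * exp ((real m * r + (real k - real m) * s + p) * x)
      / (exp (r * x) - exp (s * x)) ^ (k + 1)) has_integral fact n / (r - s) ^ (n + 1) * (S / fact k)) {0<..}"
    using assms by (intro has_integral_power_exp_div_exp_diff_power) auto
  have "c - 1 = real k - real m + (s - p) / (r - s)"
    using assms by (simp add: c_def a_def field_simps)
  then have expanded: "S = (\<Sum>i = 0..k. \<Sum>j = 0..k - i. (-1) ^ (k + i) * real ((i + j) choose j)
      * of_int (stirling1_signed k (i + j)) * (real k - real m + (s - p) / (r - s)) ^ j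
      * hurwitz_zeta_real (real (n + 1 - i)) ((r - p) / (r - s)))"
    unfolding S_def a_def by (simp add: sum_shifted_rising_coeff_eq_stirling1_double_sum)
  have via_q: "S / fact k = (\<Sum>i = 0..k. q_coeff (k + 1) i (real k - real m + (r - p) / (r - s))
      * hurwitz_zeta_real (real (n + 1 - i)) ((r - p) / (r - s)))"
    unfolding S_def c_def a_def by (rule sum_shifted_rising_coeff_div_fact_eq_q_coeff_sum)
  show ?thesis
    using has_integral_integrable[OF integral] integral_unique[OF integral]
    unfolding I_def expanded[symmetric] via_q[symmetric] by simp
qed

end
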